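(* Let $\tilde{\lambda}$ be such that there is a real number $c>-1$ with \[ 1=\sqrt{c+1}+2\tilde{\lambda}^2\log\Big(1+\frac{1}{\sqrt{c+1}}\Big), \] and fix such a $c$. Let $\rho(Y):=\frac{2\tilde{\lambda}^2}{\sqrt{Y}}$ for $Y\geq 1$ and define, for $X\geq 1$, \[ W(X):=\sqrt{X+c}+\frac{2\tilde{\lambda}^2}{\sqrt{X}}\log\Big(\frac{(\sqrt{X+c}+\sqrt{X})(\sqrt{X}+1)}{\sqrt{X}\sqrt{1+c}+\sqrt{X+c}}\Big). \] Then $W$ solves the integral equation \[ W(X)^2+\int_1^{\infty}dY\,\rho(Y)\,\frac{W(X)-W(Y)}{X-Y}= X+\int_1^{\infty}dY\,\rho(Y)\,\frac{W(1)-W(Y)}{1-Y}\qquad (X\geq 1), \] understood with the two integrals combined into the single (convergent) integral $\int_1^\infty dY\,\rho(Y)\big[\frac{W(X)-W(Y)}{X-Y}-\frac{W(1)-W(Y)}{1-Y}\big]$ on the left, so that the equation reads $W(X)^2+\int_1^\infty dY\,\rho(Y)\big[\frac{W(X)-W(Y)}{X-Y}-\frac{W(1)-W(Y)}{1-Y}\big]=X$; difference quotients at coinciding arguments are understood by continuous extension.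
   Context: This is the integral equation satisfied (in the large-matrix limit) by the renormalised one-point function of the $\Phi^3$ matrix model with linearly spaced eigenvalues $e(x)=x$ of the external matrix, in the variable $X=(2x+1)^2$, with normalisation $W(1)=1$. Square roots and logarithms are the real positive ones. *)

theory Defs
  imports "HOL-Analysis.Analysis"
begin

definition Wfun :: "real \<Rightarrow> real \<Rightarrow> real \<Rightarrow> real" where
  "Wfun lam c X = sqrt (X + c) + 2 * lam^2 / sqrt X *
     ln ((sqrt (X + c) + sqrt X) * (sqrt X + 1) / (sqrt X * sqrt (1 + c) + sqrt (X + c)))"

definition rho :: "real \<Rightarrow> real \<Rightarrow> real" where
  "rho lam Y = 2 * lam^2 / sqrt Y"

definition dq :: "(real \<Rightarrow> real) \<Rightarrow> real \<Rightarrow> real \<Rightarrow> real" where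
  "dq f a b = (if a = b then deriv f a else (f a - f b) / (a - b))"

end

theory Submission
  imports Defs "HOL-Real_Asymp.Real_Asymp"
begin

(* The logarithm in W is the closed form of an integral: W(X) = sqrt (X + c) + lam^2 G(X) with
   G(X) = \<integral>\<^sub>1\<^sup>\<infinity> dZ / (sqrt Z sqrt (Z + c) (sqrt (X + c) + sqrt (Z + c))).
   In this form the difference quotient (W(X) - W(Y)) / (X - Y) is a partial fraction in sqrt (X + c) and
   sqrt (Y + c), and the part of the integral quadratic in lam^2 is a double integral whose integrand,
   symmetrised by Fubini, is the product of two kernels: the weights sqrt (Y + c) / (sqrt (Y + c) + sqrt (Z + c))
   and sqrt (Z + c) / (sqrt (Y + c) + sqrt (Z + c)) add up to 1. It therefore equals G(X)^2 / 2, and collecting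
   terms gives W(X)^2 + \<integral> ... = (X + c) + W(1)^2 - (1 + c), which is X by the normalisation W(1) = 1. *)

lemma has_integral_atLeast_FTC_nonneg:
  fixes f F :: "real \<Rightarrow> real"
  assumes deriv: "\<And>x. a < x \<Longrightarrow> (F has_real_derivative f x) (at x)"
    and cont: "\<And>x. a < x \<Longrightarrow> isCont f x"
    and nonneg: "\<And>x. a < x \<Longrightarrow> 0 \<le> f x"
    and F_a: "isCont F a"
    and F_top: "(F \<longlongrightarrow> B) at_top"
  shows "(f has_integral B - F a) {a..}"
proof -
  have left: "((F \<circ> real_of_ereal) \<longlongrightarrow> F a) (at_right (ereal a))"
    unfolding ereal_tendsto_simps1 using F_a by (simp add: isCont_def filterlim_at_split)
  have right: "((F \<circ> real_of_ereal) \<longlongrightarrow> B) (at_left \<infinity>)"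
    unfolding ereal_tendsto_simps1 using F_top .
  have "ereal a < \<infinity>" by simp
  from interval_integral_FTC_nonneg[OF this _ _ _ left right] deriv cont nonneg
  have f_int: "set_integrable lborel {a<..} f" and "(LBINT x=ereal a..\<infinity>. f x) = B - F a"
    by (auto simp: einterval_iff)
  then have "(f has_integral B - F a) {a<..}"
    using set_borel_integral_eq_integral[OF f_int]
    by (simp add: interval_lebesgue_integral_def has_integral_integral)
  moreover have "negligible {x \<in> {a..} - {a<..}. f x \<noteq> 0}" "negligible {x \<in> {a<..} - {a..}. f x \<noteq> 0}"
    by (rule negligible_subset[of "{a}"]; auto)+
  ultimately show ?thesis
    using has_integral_spike_set_eq by blast
qed

lemma (in sigma_finite_measure) nn_integral_symmetric_product_split:
  assumes f_meas: "case_prod f \<in> borel_measurable (M \<Otimes>\<^sub>M M)" and g_meas: "g \<in> borel_measurable M"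
    and split: "\<And>x y. x \<in> space M \<Longrightarrow> y \<in> space M \<Longrightarrow> f x y + f y x = g x * g y"
  shows "2 * (\<integral>\<^sup>+x. \<integral>\<^sup>+y. f x y \<partial>M \<partial>M) = (\<integral>\<^sup>+x. g x \<partial>M)\<^sup>2"
proof -
  interpret pair_sigma_finite M M
    by unfold_locales
  note [measurable] = f_meas g_meas
  have "2 * (\<integral>\<^sup>+x. \<integral>\<^sup>+y. f x y \<partial>M \<partial>M)
      = (\<integral>\<^sup>+x. \<integral>\<^sup>+y. f x y \<partial>M \<partial>M) + (\<integral>\<^sup>+x. \<integral>\<^sup>+y. f y x \<partial>M \<partial>M)"
    using Fubini'[OF f_meas] by (simp add: mult_2)
  also have "\<dots> = (\<integral>\<^sup>+x. (\<integral>\<^sup>+y. f x y \<partial>M) + (\<integral>\<^sup>+y. f y x \<partial>M) \<partial>M)"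
    by (rule nn_integral_add[symmetric]) measurable
  also have "\<dots> = (\<integral>\<^sup>+x. \<integral>\<^sup>+y. f x y + f y x \<partial>M \<partial>M)"
    by (intro nn_integral_cong nn_integral_add[symmetric]) measurable
  also have "\<dots> = (\<integral>\<^sup>+x. \<integral>\<^sup>+y. g x * g y \<partial>M \<partial>M)"
    using split by (intro nn_integral_cong) simp
  also have "\<dots> = (\<integral>\<^sup>+x. g x \<partial>M)\<^sup>2"
    using g_meas by (simp add: nn_integral_cmult nn_integral_multc power2_eq_square)
  finally show ?thesis .
qed

lemma has_integral_integral_of_iterated_nn_integral:
  fixes f :: "real \<Rightarrow> real \<Rightarrow> real" and S :: "real set"
  assumes S: "S \<in> sets borel"
    and f_meas: "case_prod f \<in> borel_measurable (lborel \<Otimes>\<^sub>M lborel)"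
    and f_nonneg: "\<And>x y. x \<in> S \<Longrightarrow> y \<in> S \<Longrightarrow> 0 \<le> f x y"
    and f_int: "\<And>x. x \<in> S \<Longrightarrow> f x integrable_on S"
    and iterated: "(\<integral>\<^sup>+x. \<integral>\<^sup>+y. ennreal (f x y) * indicator S x * indicator S y \<partial>lborel \<partial>lborel) = ennreal r"
    and r: "0 \<le> r"
  shows "((\<lambda>x. integral S (f x)) has_integral r) S"
proof -
  have [measurable]: "S \<in> sets lborel"
    using S by simp
  note [measurable] = f_meas
  have inner: "(\<integral>\<^sup>+y. ennreal (f x y) * indicator S x * indicator S y \<partial>lborel)
      = ennreal (indicator S x * integral S (f x))" for x
  proof (cases "x \<in> S")
    case True
    then have "(\<integral>\<^sup>+y. ennreal (f x y) * indicator S x * indicator S y \<partial>lborel)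
        = (\<integral>\<^sup>+y. ennreal (f x y) * indicator S y \<partial>lborel)"
      by simp
    also have "\<dots> = ennreal (integral S (f x))"
      using True f_nonneg f_int by (intro nn_integral_has_integral_lebesgue' integrable_integral) auto
    finally show ?thesis using True by simp
  qed simp
  define h where "h x = indicator S x * integral S (f x)" for x
  have h_nonneg: "0 \<le> h x" for x
    unfolding h_def using f_int f_nonneg by (auto intro: integral_nonneg simp: indicator_def)
  have "h \<in> borel_measurable lborel"
  proof -
    have "(\<lambda>x. enn2real (\<integral>\<^sup>+y. ennreal (f x y) * indicator S x * indicator S y \<partial>lborel))
        \<in> borel_measurable lborel"
      by measurable
    then show ?thesis
      by (simp add: inner h_def[symmetric] h_nonneg)
  qed
  moreover have "(\<integral>\<^sup>+x. h x \<partial>lborel) = ennreal r"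
    using iterated unfolding inner h_def .
  ultimately have "(h has_integral r) UNIV"
    using r by (intro nn_integral_has_integral h_nonneg) auto
  then have "((\<lambda>x. if x \<in> S then integral S (f x) else 0) has_integral r) UNIV"
    by (rule has_integral_cong[THEN iffD1, rotated]) (simp add: h_def)
  then show ?thesis
    unfolding has_integral_restrict_UNIV .
qed

lemma has_integral_symmetric_product_split:
  fixes f :: "real \<Rightarrow> real \<Rightarrow> real" and g :: "real \<Rightarrow> real" and S :: "real set"
  assumes S: "S \<in> sets borel"
    and f_meas: "case_prod f \<in> borel_measurable (lborel \<Otimes>\<^sub>M lborel)"
    and g_meas: "g \<in> borel_measurable lborel"
    and f_nonneg: "\<And>x y. x \<in> S \<Longrightarrow> y \<in> S \<Longrightarrow> 0 \<le> f x y"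
    and g_nonneg: "\<And>x. x \<in> S \<Longrightarrow> 0 \<le> g x"
    and f_int: "\<And>x. x \<in> S \<Longrightarrow> f x integrable_on S"
    and g_int: "(g has_integral G) S"
    and split: "\<And>x y. x \<in> S \<Longrightarrow> y \<in> S \<Longrightarrow> f x y + f y x = g x * g y"
  shows "((\<lambda>x. integral S (f x)) has_integral G^2 / 2) S"
proof (rule has_integral_integral_of_iterated_nn_integral[OF S f_meas f_nonneg f_int])
  define f' where "f' x y = ennreal (f x y) * indicator S x * indicator S y" for x y
  define g' where "g' x = ennreal (g x) * indicator S x" for x
  have [measurable]: "S \<in> sets lborel"
    using S by simp
  have f'_meas: "case_prod f' \<in> borel_measurable (lborel \<Otimes>\<^sub>M lborel)"
    unfolding f'_def using f_meas by measurable
  have g'_meas: "g' \<in> borel_measurable lborel"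
    unfolding g'_def using g_meas by measurable
  have G_nonneg: "0 \<le> G"
    using g_int g_nonneg by (rule has_integral_nonneg)
  have "(\<integral>\<^sup>+y. g' y \<partial>lborel) = ennreal G"
    unfolding g'_def using g_nonneg g_int by (rule nn_integral_has_integral_lebesgue')
  moreover have "f' x y + f' y x = g' x * g' y" for x y
    by (auto simp: f'_def g'_def split f_nonneg g_nonneg ennreal_plus[symmetric] ennreal_mult[symmetric]
             simp del: ennreal_plus split: split_indicator)
  ultimately have "2 * (\<integral>\<^sup>+x. \<integral>\<^sup>+y. f' x y \<partial>lborel \<partial>lborel) = ennreal (G\<^sup>2)"
    using lborel.nn_integral_symmetric_product_split[OF f'_meas g'_meas] G_nonneg
    by (simp add: ennreal_power)
  then show "(\<integral>\<^sup>+x. \<integral>\<^sup>+y. f' x y \<partial>lborel \<partial>lborel) = ennreal (G\<^sup>2 / 2)"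
  proof (cases "\<integral>\<^sup>+x. \<integral>\<^sup>+y. f' x y \<partial>lborel \<partial>lborel" rule: ennreal_cases)
    case (real r)
    with \<open>2 * _ = ennreal (G\<^sup>2)\<close> have "ennreal (2 * r) = ennreal (G\<^sup>2)"
      by (simp add: ennreal_mult)
    then have "2 * r = G\<^sup>2"
      using real by (subst (asm) ennreal_inj) auto
    then show ?thesis
      using real by simp
  qed simp
  show "0 \<le> G\<^sup>2 / 2"
    by simp
qed

definition W_kernel :: "real \<Rightarrow> real \<Rightarrow> real \<Rightarrow> real" where
  "W_kernel c X Z = 1 / (sqrt Z * sqrt (Z + c) * (sqrt (X + c) + sqrt (Z + c)))"

definition W_kernel_integral :: "real \<Rightarrow> real \<Rightarrow> real" where
  "W_kernel_integral c X = integral {1..} (W_kernel c X)"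

lemma W_kernel_pos:
  assumes "c > -1" "1 \<le> Z" "0 \<le> X + c"
  shows "0 < W_kernel c X Z"
proof -
  have "0 < sqrt (Z + c)" using assms by simp
  then show ?thesis
    unfolding W_kernel_def using assms by (simp add: add_nonneg_pos)
qed

lemma isCont_W_kernel:
  assumes "c > -1" "1 \<le> Z" "0 \<le> X + c"
  shows "isCont (W_kernel c X) Z"
proof -
  have "0 < sqrt (Z + c)" using assms by simp
  then have "0 < sqrt (X + c) + sqrt (Z + c)" using assms by (simp add: add_nonneg_pos)
  then show ?thesis
    unfolding W_kernel_def using assms by (intro continuous_intros) auto
qed

lemma W_kernel_primitive_deriv:
  assumes "0 < X" "0 < X + c" "0 < Z" "0 < Z + c"
  shows "((\<lambda>Z. 2 / sqrt X * (ln (sqrt (X + c) * sqrt Z + sqrt X * sqrt (Z + c)) - ln (sqrt X + sqrt Z)))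
          has_real_derivative W_kernel c X Z) (at Z)"
proof -
  define u x z w where "u = sqrt (X + c)" and "x = sqrt X" and "z = sqrt Z" and "w = sqrt (Z + c)"
  have pos: "0 < u" "0 < x" "0 < z" "0 < w"
    unfolding u_def x_def z_def w_def using assms by auto
  have sq: "u\<^sup>2 = x\<^sup>2 + c" "w\<^sup>2 = z\<^sup>2 + c"
    unfolding u_def x_def z_def w_def using assms by auto
  have "u * z + x * w > 0" "x + z > 0" "u + w > 0"
    using pos by (auto intro: add_pos_pos)
  then have "2 / x * ((u / (2 * z) + x / (2 * w)) / (u * z + x * w) - 1 / (2 * z) / (x + z))
      = 1 / (z * w * (u + w))"
    using pos sq by (simp add: divide_simps) algebra
  moreover have "((\<lambda>Z. 2 / x * (ln (u * sqrt Z + x * sqrt (Z + c)) - ln (x + sqrt Z))) has_real_derivative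
      2 / x * ((u / (2 * z) + x / (2 * w)) / (u * z + x * w) - 1 / (2 * z) / (x + z))) (at Z)"
    using assms pos \<open>u * z + x * w > 0\<close> \<open>x + z > 0\<close> unfolding z_def w_def
    by (auto intro!: derivative_eq_intros simp: divide_simps)
  ultimately show ?thesis
    unfolding W_kernel_def u_def x_def z_def w_def by simp
qed

lemma W_kernel_has_integral:
  assumes c: "c > -1" and X: "0 < X" "0 < X + c"
  shows "(W_kernel c X has_integral
     2 / sqrt X * ln ((sqrt (X + c) + sqrt X) * (sqrt X + 1) / (sqrt X * sqrt (1 + c) + sqrt (X + c)))) {1..}"
proof -
  define u x s where "u = sqrt (X + c)" and "x = sqrt X" and "s = sqrt (1 + c)"
  have pos: "0 < u" "0 < x" "0 < s"
    unfolding u_def x_def s_def using X c by auto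
  define F where "F Z = 2 / x * (ln (u * sqrt Z + x * sqrt (Z + c)) - ln (x + sqrt Z))" for Z
  have "(W_kernel c X has_integral 2 / x * ln (u + x) - F 1) {1..}"
  proof (rule has_integral_atLeast_FTC_nonneg)
    show "(F has_real_derivative W_kernel c X Z) (at Z)" if "1 < Z" for Z
      unfolding F_def u_def x_def using W_kernel_primitive_deriv[OF X] that c by simp
    show "isCont (W_kernel c X) Z" "0 \<le> W_kernel c X Z" if "1 < Z" for Z
      using isCont_W_kernel W_kernel_pos that c X by (auto intro: less_imp_le)
    have "0 < u + x * s" using pos by (simp add: add_pos_pos)
    then show "isCont F 1"
      unfolding F_def using c pos by (intro continuous_intros) (auto simp: s_def add.commute)
    show "(F \<longlongrightarrow> 2 / x * ln (u + x)) at_top"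
      unfolding F_def using pos by real_asymp
  qed
  moreover have "2 / x * ln (u + x) - F 1 = 2 / x * ln ((u + x) * (x + 1) / (x * s + u))"
  proof -
    have "0 < u + x" "0 < x + 1" "0 < x * s + u"
      using pos by (auto intro: add_pos_pos)
    then have ln_eq: "ln ((u + x) * (x + 1) / (x * s + u)) = ln (u + x) + ln (x + 1) - ln (x * s + u)"
      by (simp add: ln_div ln_mult)
    have F_1: "F 1 = 2 / x * (ln (x * s + u) - ln (x + 1))"
      by (simp add: F_def s_def add.commute)
    show ?thesis
      unfolding ln_eq F_1 by (simp add: algebra_simps)
  qed
  ultimately show ?thesis
    unfolding u_def x_def s_def by simp
qed

lemma W_kernel_has_integral_integral:
  assumes "c > -1" "0 < X" "0 < X + c"
  shows "(W_kernel c X has_integral W_kernel_integral c X) {1..}"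
  using W_kernel_has_integral[OF assms] unfolding W_kernel_integral_def
  by (auto simp: has_integral_integral)

lemma Wfun_eq_W_kernel_integral:
  assumes "c > -1" "0 < X" "0 < X + c"
  shows "Wfun lam c X = sqrt (X + c) + lam\<^sup>2 * W_kernel_integral c X"
  unfolding Wfun_def W_kernel_integral_def integral_unique[OF W_kernel_has_integral[OF assms]] by simp

lemma W_kernel_div_integrable:
  assumes c: "c > -1" and X: "0 < X" "0 < X + c" and q: "0 < q"
  shows "(\<lambda>Z. W_kernel c X Z / (q + sqrt (Z + c))) integrable_on {1..}"
proof -
  have "continuous_on {1..} (\<lambda>Z. W_kernel c X Z / (q + sqrt (Z + c)))"
  proof (intro continuous_at_imp_continuous_on ballI)
    fix Z :: real assume "Z \<in> {1..}"
    moreover have "0 < q + sqrt (Z + c)" if "1 \<le> Z" using that c q by (simp add: add_pos_nonneg)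
    ultimately show "isCont (\<lambda>Z. W_kernel c X Z / (q + sqrt (Z + c))) Z"
      using isCont_W_kernel c X by (intro continuous_intros) auto
  qed
  then have "(\<lambda>Z. W_kernel c X Z / (q + sqrt (Z + c))) absolutely_integrable_on {1..}"
  proof (rule measurable_bounded_by_integrable_imp_absolutely_integrable
        [OF continuous_imp_measurable_on_sets_lebesgue])
    show "(\<lambda>Z. W_kernel c X Z / q) integrable_on {1..}"
      using W_kernel_has_integral_integral[OF c X] by (intro integrable_on_divide) blast
    show "norm (W_kernel c X Z / (q + sqrt (Z + c))) \<le> W_kernel c X Z / q" if "Z \<in> {1..}" for Z
      using W_kernel_pos[of c Z X] that c X q by (simp add: frac_le)
  qed auto
  then show ?thesis
    using set_lebesgue_integral_eq_integral(1) by blast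
qed

lemma W_kernel_partial_fractions:
  assumes "c > -1" "1 \<le> Z" "0 \<le> X + c" "0 \<le> Y + c" "X \<noteq> Y"
  shows "W_kernel c X Z / (sqrt (Y + c) + sqrt (Z + c))
    = (W_kernel c X Z - W_kernel c Y Z) / (sqrt (Y + c) - sqrt (X + c))"
proof -
  have "0 < sqrt Z" "0 < sqrt (Z + c)" using assms by auto
  moreover have "0 < sqrt (X + c) + sqrt (Z + c)" "0 < sqrt (Y + c) + sqrt (Z + c)"
    using assms \<open>0 < sqrt (Z + c)\<close> by (auto intro: add_nonneg_pos)
  moreover have "sqrt (X + c) \<noteq> sqrt (Y + c)" using assms by simp
  ultimately show ?thesis
    unfolding W_kernel_def by (simp add: divide_simps)
qed

lemma integral_W_kernel_div:
  assumes c: "c > -1" and X: "0 < X" "0 < X + c" and Y: "0 < Y" "0 < Y + c" and "X \<noteq> Y"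
  shows "integral {1..} (\<lambda>Z. W_kernel c X Z / (sqrt (Y + c) + sqrt (Z + c)))
    = (W_kernel_integral c X - W_kernel_integral c Y) / (sqrt (Y + c) - sqrt (X + c))"
proof -
  have "integral {1..} (\<lambda>Z. W_kernel c X Z / (sqrt (Y + c) + sqrt (Z + c)))
      = integral {1..} (\<lambda>Z. (W_kernel c X Z - W_kernel c Y Z) / (sqrt (Y + c) - sqrt (X + c)))"
    using X(2) Y(2) by (intro integral_cong W_kernel_partial_fractions[OF c _ _ _ \<open>X \<noteq> Y\<close>]) auto
  also have "\<dots> = (W_kernel_integral c X - W_kernel_integral c Y) / (sqrt (Y + c) - sqrt (X + c))"
    by (rule integral_unique[OF has_integral_divide[OF has_integral_diff[OF
          W_kernel_has_integral_integral[OF c X] W_kernel_has_integral_integral[OF c Y]]]])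
  finally show ?thesis .
qed

definition W_kernel_sq_density :: "real \<Rightarrow> real \<Rightarrow> real \<Rightarrow> real" where
  "W_kernel_sq_density c X Y =
     sqrt (Y + c) * W_kernel c X Y * integral {1..} (\<lambda>Z. W_kernel c X Z / (sqrt (Y + c) + sqrt (Z + c)))"

lemma W_kernel_sq_density_has_integral:
  assumes c: "c > -1" and X: "0 < X" "0 < X + c"
  shows "(W_kernel_sq_density c X has_integral (W_kernel_integral c X)\<^sup>2 / 2) {1..}"
proof -
  define f where "f Y Z = sqrt (Y + c) * W_kernel c X Y * (W_kernel c X Z / (sqrt (Y + c) + sqrt (Z + c)))"
    for Y Z
  have "((\<lambda>Y. integral {1..} (f Y)) has_integral (W_kernel_integral c X)\<^sup>2 / 2) {1..}"
  proof (rule has_integral_symmetric_product_split)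
    show "case_prod f \<in> borel_measurable (lborel \<Otimes>\<^sub>M lborel)" "W_kernel c X \<in> borel_measurable lborel"
      unfolding f_def W_kernel_def by measurable
    show "0 \<le> f Y Z" "0 \<le> W_kernel c X Y" if "Y \<in> {1..}" "Z \<in> {1..}" for Y Z
    proof -
      have "0 < W_kernel c X Y" "0 < W_kernel c X Z" "0 < sqrt (Y + c)" "0 < sqrt (Z + c)"
        using that c X W_kernel_pos by auto
      then show "0 \<le> f Y Z" "0 \<le> W_kernel c X Y"
        unfolding f_def by simp_all
    qed
    show "f Y integrable_on {1..}" if "Y \<in> {1..}" for Y
    proof -
      have "0 < sqrt (Y + c)" using that c by simp
      then show ?thesis
        unfolding f_def by (intro integrable_on_mult_right W_kernel_div_integrable[OF c X])
    qed
    show "f Y Z + f Z Y = W_kernel c X Y * W_kernel c X Z" if "Y \<in> {1..}" "Z \<in> {1..}" for Y Z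
    proof -
      define v w where "v = sqrt (Y + c)" and "w = sqrt (Z + c)"
      have "0 < v + w" using that c by (simp add: v_def w_def add_pos_pos)
      then have "v / (v + w) + w / (v + w) = 1"
        by (simp add: add_divide_distrib[symmetric])
      moreover have "f Y Z + f Z Y = W_kernel c X Y * W_kernel c X Z * (v / (v + w) + w / (v + w))"
        unfolding f_def v_def[symmetric] w_def[symmetric] by (simp add: add.commute[of w v] algebra_simps)
      ultimately show ?thesis by simp
    qed
  qed (use W_kernel_has_integral_integral[OF c X] in auto)
  moreover have "integral {1..} (f Y) = W_kernel_sq_density c X Y" for Y
    unfolding f_def W_kernel_sq_density_def by (rule integral_mult_right)
  ultimately show ?thesis by simp
qed

lemma W_kernel_mult_denominator:
  assumes "0 \<le> X + c" "0 < Y + c"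
  shows "(sqrt (X + c) + sqrt (Y + c)) * W_kernel c X Y = 1 / (sqrt Y * sqrt (Y + c))"
proof -
  have "0 < sqrt (X + c) + sqrt (Y + c)" using assms by (simp add: add_nonneg_pos)
  then show ?thesis unfolding W_kernel_def by simp
qed

lemma rho_mult_dq_Wfun:
  assumes c: "c > -1" and X: "0 < X" "0 < X + c" and Y: "0 < Y" "0 < Y + c" and "Y \<noteq> X"
  shows "rho lam Y * dq (Wfun lam c) X Y
    = 2 * lam\<^sup>2 * sqrt (Y + c) * W_kernel c X Y - 2 * lam ^ 4 * W_kernel_sq_density c X Y"
proof -
  define u v y where "u = sqrt (X + c)" and "v = sqrt (Y + c)" and "y = sqrt Y"
  define GX GY where "GX = W_kernel_integral c X" and "GY = W_kernel_integral c Y"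
  have pos: "0 < u" "0 < v" "0 < y"
    unfolding u_def v_def y_def using X Y by auto
  have "u \<noteq> v" unfolding u_def v_def using X Y \<open>Y \<noteq> X\<close> by simp
  have X_Y: "X - Y = (u - v) * (u + v)"
    unfolding u_def v_def using X Y by (simp add: algebra_simps)
  have "rho lam Y * dq (Wfun lam c) X Y = 2 * lam\<^sup>2 / y * (u - v + lam\<^sup>2 * (GX - GY)) / (X - Y)"
    unfolding rho_def dq_def Wfun_eq_W_kernel_integral[OF c X] Wfun_eq_W_kernel_integral[OF c Y]
      u_def v_def y_def GX_def GY_def using \<open>Y \<noteq> X\<close> by (simp add: algebra_simps)
  also have "\<dots> = 2 * lam\<^sup>2 * v * (1 / (y * v * (u + v)))
      - 2 * lam ^ 4 * (v * (1 / (y * v * (u + v))) * ((GX - GY) / (v - u)))"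
    unfolding X_Y using pos \<open>u \<noteq> v\<close> by (simp add: divide_simps) (simp add: algebra_simps power4_eq_xxxx)
  also have "\<dots> = 2 * lam\<^sup>2 * sqrt (Y + c) * W_kernel c X Y - 2 * lam ^ 4 * W_kernel_sq_density c X Y"
    unfolding W_kernel_sq_density_def integral_W_kernel_div[OF c X Y \<open>Y \<noteq> X\<close>[symmetric]]
    by (simp add: W_kernel_def u_def v_def y_def GX_def GY_def mult.assoc)
  finally show ?thesis .
qed

(* Each term sqrt (Y + c) * W_kernel c X Y of rho_mult_dq_Wfun decays only like 1 / Y; their difference
   is rewritten as a combination of integrable kernels. *)
lemma rho_mult_dq_Wfun_diff:
  assumes c: "c > -1" and X: "0 < X" "0 < X + c" and X': "0 < X'" "0 < X' + c"
    and Y: "0 < Y" "0 < Y + c" "Y \<noteq> X" "Y \<noteq> X'"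
  shows "rho lam Y * (dq (Wfun lam c) X Y - dq (Wfun lam c) X' Y)
    = 2 * lam\<^sup>2 * (sqrt (X' + c) * W_kernel c X' Y - sqrt (X + c) * W_kernel c X Y)
      - 2 * lam ^ 4 * (W_kernel_sq_density c X Y - W_kernel_sq_density c X' Y)"
proof -
  have "(sqrt (X + c) + sqrt (Y + c)) * W_kernel c X Y = (sqrt (X' + c) + sqrt (Y + c)) * W_kernel c X' Y"
    using W_kernel_mult_denominator X X' Y by simp
  then have kernel_diff: "sqrt (X' + c) * W_kernel c X' Y - sqrt (X + c) * W_kernel c X Y
      = sqrt (Y + c) * W_kernel c X Y - sqrt (Y + c) * W_kernel c X' Y"
    by (simp add: distrib_right)
  show ?thesis
    unfolding right_diff_distrib[of "rho lam Y"] rho_mult_dq_Wfun[OF c X Y(1,2,3)]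
      rho_mult_dq_Wfun[OF c X' Y(1,2,4)] kernel_diff
    by (simp add: algebra_simps)
qed

lemma Wfun_one:
  assumes "c > -1"
  shows "Wfun lam c 1 = sqrt (c + 1) + 2 * lam\<^sup>2 * ln (1 + 1 / sqrt (c + 1))"
proof -
  have "0 < sqrt (c + 1)" using assms by simp
  then have "(sqrt (c + 1) + 1) * (1 + 1) / (sqrt (c + 1) + sqrt (c + 1)) = 1 + 1 / sqrt (c + 1)"
    by (simp add: field_simps)
  then show ?thesis
    unfolding Wfun_def by (simp add: add.commute)
qed

lemma rho_mult_dq_Wfun_diff_has_integral:
  assumes c: "c > -1" and X: "0 < X" "0 < X + c" and X': "0 < X'" "0 < X' + c"
  shows "((\<lambda>Y. rho lam Y * (dq (Wfun lam c) X Y - dq (Wfun lam c) X' Y)) has_integral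
    2 * lam\<^sup>2 * (sqrt (X' + c) * W_kernel_integral c X' - sqrt (X + c) * W_kernel_integral c X)
      - 2 * lam ^ 4 * ((W_kernel_integral c X)\<^sup>2 / 2 - (W_kernel_integral c X')\<^sup>2 / 2)) {1..}"
proof (rule has_integral_spike_finite)
  show "finite {X, X'}" by simp
  show "rho lam Y * (dq (Wfun lam c) X Y - dq (Wfun lam c) X' Y)
      = 2 * lam\<^sup>2 * (sqrt (X' + c) * W_kernel c X' Y - sqrt (X + c) * W_kernel c X Y)
        - 2 * lam ^ 4 * (W_kernel_sq_density c X Y - W_kernel_sq_density c X' Y)"
    if "Y \<in> {1..} - {X, X'}" for Y
    using that c by (intro rho_mult_dq_Wfun_diff[OF c X X']) auto
  show "((\<lambda>Y. 2 * lam\<^sup>2 * (sqrt (X' + c) * W_kernel c X' Y - sqrt (X + c) * W_kernel c X Y)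
      - 2 * lam ^ 4 * (W_kernel_sq_density c X Y - W_kernel_sq_density c X' Y)) has_integral
    2 * lam\<^sup>2 * (sqrt (X' + c) * W_kernel_integral c X' - sqrt (X + c) * W_kernel_integral c X)
      - 2 * lam ^ 4 * ((W_kernel_integral c X)\<^sup>2 / 2 - (W_kernel_integral c X')\<^sup>2 / 2)) {1..}"
    using W_kernel_has_integral_integral[OF c X] W_kernel_has_integral_integral[OF c X']
      W_kernel_sq_density_has_integral[OF c X] W_kernel_sq_density_has_integral[OF c X']
    by (intro has_integral_diff has_integral_mult_right)
qed

theorem proposition1:
  fixes lam c :: real
  assumes hc: "c > -1"
    and heq: "1 = sqrt (c + 1) + 2 * lam^2 * ln (1 + 1 / sqrt (c + 1))"
  shows "\<forall>X\<ge>1.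
     (\<lambda>Y. rho lam Y * (dq (Wfun lam c) X Y - dq (Wfun lam c) 1 Y)) integrable_on {1..} \<and>
     (Wfun lam c X)^2
       + integral {1..} (\<lambda>Y. rho lam Y * (dq (Wfun lam c) X Y - dq (Wfun lam c) 1 Y)) = X"
proof (intro allI impI)
  fix X :: real
  assume "1 \<le> X"
  then have X: "0 < X" "0 < X + c" and one: "0 < (1::real)" "0 < 1 + c"
    using hc by auto
  define u s G where "u = sqrt (X + c)" and "s = sqrt (1 + c)" and "G = W_kernel_integral c"
  note integral = rho_mult_dq_Wfun_diff_has_integral[OF hc X one, of lam, folded u_def s_def G_def]
  have "s + lam\<^sup>2 * G 1 = 1"
    using Wfun_eq_W_kernel_integral[OF hc one, of lam]
    unfolding Wfun_one[OF hc] heq[symmetric] s_def G_def by simp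
  moreover have "u\<^sup>2 = X + c" "s\<^sup>2 = 1 + c"
    unfolding u_def s_def using X one by auto
  moreover have "(u + lam\<^sup>2 * G X)\<^sup>2 + (2 * lam\<^sup>2 * (s * G 1 - u * G X) - 2 * lam ^ 4 * ((G X)\<^sup>2 / 2 - (G 1)\<^sup>2 / 2))
      = u\<^sup>2 + (s + lam\<^sup>2 * G 1)\<^sup>2 - s\<^sup>2"
    by (simp add: power2_eq_square power4_eq_xxxx algebra_simps)
  ultimately show "(\<lambda>Y. rho lam Y * (dq (Wfun lam c) X Y - dq (Wfun lam c) 1 Y)) integrable_on {1..} \<and>
      (Wfun lam c X)^2
        + integral {1..} (\<lambda>Y. rho lam Y * (dq (Wfun lam c) X Y - dq (Wfun lam c) 1 Y)) = X"
    using integral integral_unique[OF integral]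
    unfolding Wfun_eq_W_kernel_integral[OF hc X] u_def[symmetric] G_def[symmetric] by auto
qed

end
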